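(* Every $\epsilon_5$-segment bipath $P$ from $u$ to $v$ in $G$ is an $\epsilon_5$-bipath.
   Context: $G=(V,E)$ is an undirected graph with $n\ge3$ vertices and real edge weights in $[1,W]$; shortest paths in every subgraph are assumed unique, $\pi_{G'}(x,y)$ is the shortest $x$-$y$ path in $G'$, $\circ$ is path concatenation, $|P|$ weighted length, $P[a,b]$ subpath. Let $k=\ln n$, $\epsilon>0$, $\epsilon_1=\epsilon/(2+\epsilon)$, $\epsilon_5=\epsilon_1/(4k-2)$. Let $V=U_1,\dots,U_p$ be subsets of $V$; the level $l(v)$ is the largest $l$ with $v\in U_l$, and $G_i$ is the subgraph induced by vertices of level $\le i$. $\epsilon_5$-segments: for $P=(u=v_0,\dots,v_\ell=v)$ and $1\le i,j<\ell$, $v_i,v_j$ are in the same segment if either both $|P[u,v_i]|,|P[u,v_j]|\le|P|/2$ and $\lfloor\log_{1+\epsilon_5}|P[u,v_i]|\rfloor=\lfloor\log_{1+\epsilon_5}|P[u,v_j]|\rfloor$, or both $|P[v_i,v]|,|P[v_j,v]|<|P|/2$ and $\lfloor\log_{1+\epsilon_5}|P[v_i,v]|\rfloor=\lfloor\log_{1+\epsilon_5}|P[v_j,v]|\rfloor$; classes are contiguous, $u,v$ in no segment. $P$ is an $\epsilon_5$-segment bipath if every segment $P[x,y]$ equals $\pi_{G_i}(x,z)\circ\pi_{G_j}(z,y)$ for some levels $1\le i,j\le p$ and some $z\in P[x,y]$. Let $B=\lceil\log_{1+\epsilon_5}(nW)\rceil$. $P$ is an $\epsilon_5$-bipath if it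 is a concatenation $e_0,P_0,e_1,\dots,P_{2B+1},e_{2B+2}$ with each $e_i$ empty or an edge, each $P_k=P[u_k,v_k]$ either empty or of the form $\pi_{G_i}(u_k,z)\circ\pi_{G_j}(z,v_k)$ for some $z\in P_k$ and levels $1\le i,j\le p$, and $|P[u,v_k]|\le(1+\epsilon_5)^k$ if $k<B+1$, $|P[u_k,v]|\le(1+\epsilon_5)^{2B+1-k}$ if $k\ge B+1$ (for nonempty $P_k$). *)

theory Defs
  imports "HOL-Analysis.Analysis"
begin

definition is_path :: "'a set \<Rightarrow> ('a \<times> 'a) set \<Rightarrow> 'a list \<Rightarrow> bool" where
  "is_path S F P \<longleftrightarrow> P \<noteq> [] \<and> distinct P \<and> set P \<subseteq> S \<and>
     (\<forall>i. Suc i < length P \<longrightarrow> (P ! i, P ! Suc i) \<in> F)"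

definition wlen :: "('a \<Rightarrow> 'a \<Rightarrow> real) \<Rightarrow> 'a list \<Rightarrow> real" where
  "wlen w P = (\<Sum>i<length P - 1. w (P ! i) (P ! Suc i))"

definition is_shortest ::
  "'a set \<Rightarrow> ('a \<times> 'a) set \<Rightarrow> ('a \<Rightarrow> 'a \<Rightarrow> real) \<Rightarrow> 'a \<Rightarrow> 'a \<Rightarrow> 'a list \<Rightarrow> bool" where
  "is_shortest S F w x y P \<longleftrightarrow> is_path S F P \<and> hd P = x \<and> last P = y \<and>
     (\<forall>Q. is_path S F Q \<and> hd Q = x \<and> last Q = y \<longrightarrow> wlen w P \<le> wlen w Q)"

text \<open>The (assumed unique) shortest x-y path in the subgraph (S,F).\<close>
definition spath ::
  "'a set \<Rightarrow> ('a \<times> 'a) set \<Rightarrow> ('a \<Rightarrow> 'a \<Rightarrow> real) \<Rightarrow> 'a \<Rightarrow> 'a \<Rightarrow> 'a list" where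
  "spath S F w x y = (THE P. is_shortest S F w x y P)"

text \<open>Path concatenation (the empty list is the empty path).\<close>
fun pcat :: "'a list \<Rightarrow> 'a list \<Rightarrow> 'a list" where
  "pcat [] q = q"
| "pcat p [] = p"
| "pcat p q = p @ tl q"

definition compat :: "'a list \<Rightarrow> 'a list \<Rightarrow> bool" where
  "compat p q \<longleftrightarrow> p = [] \<or> q = [] \<or> last p = hd q"

definition chain :: "'a list list \<Rightarrow> 'a list" where
  "chain L = foldl pcat [] L"

definition chain_ok :: "'a list list \<Rightarrow> bool" where
  "chain_ok L \<longleftrightarrow> (\<forall>m < length L. compat (chain (take m L)) (L ! m))"

definition subp :: "'a list \<Rightarrow> nat \<Rightarrow> nat \<Rightarrow> 'a list" where
  "subp P a b = take (Suc b - a) (drop a P)"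

definition lev :: "(nat \<Rightarrow> 'a set) \<Rightarrow> nat \<Rightarrow> 'a \<Rightarrow> nat" where
  "lev U p x = Max {l \<in> {1..p}. x \<in> U l}"

definition Gi_V :: "'a set \<Rightarrow> (nat \<Rightarrow> 'a set) \<Rightarrow> nat \<Rightarrow> nat \<Rightarrow> 'a set" where
  "Gi_V V U p i = {x \<in> V. lev U p x \<le> i}"

definition Gi_E :: "'a set \<Rightarrow> ('a \<times> 'a) set \<Rightarrow> (nat \<Rightarrow> 'a set) \<Rightarrow> nat \<Rightarrow> nat \<Rightarrow> ('a \<times> 'a) set" where
  "Gi_E V E U p i = E \<inter> (Gi_V V U p i \<times> Gi_V V U p i)"

definition piG ::
  "'a set \<Rightarrow> ('a \<times> 'a) set \<Rightarrow> ('a \<Rightarrow> 'a \<Rightarrow> real) \<Rightarrow> (nat \<Rightarrow> 'a set) \<Rightarrow> nat \<Rightarrow> nat \<Rightarrow> 'a \<Rightarrow> 'a \<Rightarrow> 'a list" where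
  "piG V E w U p i x y = spath (Gi_V V U p i) (Gi_E V E U p i) w x y"

definition two_sp ::
  "'a set \<Rightarrow> ('a \<times> 'a) set \<Rightarrow> ('a \<Rightarrow> 'a \<Rightarrow> real) \<Rightarrow> (nat \<Rightarrow> 'a set) \<Rightarrow> nat \<Rightarrow> 'a list \<Rightarrow> bool" where
  "two_sp V E w U p Q \<longleftrightarrow> (\<exists>z \<in> set Q. \<exists>i j. 1 \<le> i \<and> i \<le> p \<and> 1 \<le> j \<and> j \<le> p \<and>
      Q = pcat (piG V E w U p i (hd Q) z) (piG V E w U p j z (last Q)))"

text \<open>k = ln n, eps1 = eps/(2+eps), eps5 = eps1/(4k-2).\<close>
definition eps5 :: "nat \<Rightarrow> real \<Rightarrow> real" where
  "eps5 n \<epsilon> = (\<epsilon> / (2 + \<epsilon>)) / (4 * ln (real n) - 2)"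

definition Bnd :: "nat \<Rightarrow> real \<Rightarrow> real \<Rightarrow> nat" where
  "Bnd n W \<epsilon> = nat \<lceil>log (1 + eps5 n \<epsilon>) (real n * W)\<rceil>"

text \<open>For P = (v_0,...,v_l) and 1 <= i,j < l: same eps5-segment.\<close>
definition same_seg :: "('a \<Rightarrow> 'a \<Rightarrow> real) \<Rightarrow> real \<Rightarrow> 'a list \<Rightarrow> nat \<Rightarrow> nat \<Rightarrow> bool" where
  "same_seg w e P i j \<longleftrightarrow>
     (let L = wlen w P; du = (\<lambda>t. wlen w (take (Suc t) P)); dv = (\<lambda>t. wlen w (drop t P)) in
       (du i \<le> L / 2 \<and> du j \<le> L / 2 \<and>
          \<lfloor>log (1 + e) (du i)\<rfloor> = \<lfloor>log (1 + e) (du j)\<rfloor>) \<or>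
       (dv i < L / 2 \<and> dv j < L / 2 \<and>
          \<lfloor>log (1 + e) (dv i)\<rfloor> = \<lfloor>log (1 + e) (dv j)\<rfloor>))"

text \<open>The segment class of index i (for 1 <= i < l); as a segment it is P[v_a, v_b] with
  a, b the least and greatest index of the class (classes are contiguous).\<close>
definition seg_class :: "('a \<Rightarrow> 'a \<Rightarrow> real) \<Rightarrow> real \<Rightarrow> 'a list \<Rightarrow> nat \<Rightarrow> nat set" where
  "seg_class w e P i = {j \<in> {1..<length P - 1}. same_seg w e P i j}"

definition segment_bipath ::
  "'a set \<Rightarrow> ('a \<times> 'a) set \<Rightarrow> ('a \<Rightarrow> 'a \<Rightarrow> real) \<Rightarrow> (nat \<Rightarrow> 'a set) \<Rightarrow> nat \<Rightarrow> real \<Rightarrow> 'a list \<Rightarrow> bool" where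
  "segment_bipath V E w U p e P \<longleftrightarrow>
     (\<forall>i \<in> {1..<length P - 1}.
        (let C = seg_class w e P i; a = Min C; b = Max C in
          \<exists>z \<in> {a..b}. \<exists>li lj. 1 \<le> li \<and> li \<le> p \<and> 1 \<le> lj \<and> lj \<le> p \<and>
            subp P a b = pcat (piG V E w U p li (P ! a) (P ! z)) (piG V E w U p lj (P ! z) (P ! b))))"

text \<open>P = e_0, P_0, e_1, ..., P_{2B+1}, e_{2B+2}; the pieces are stored in a list L of length
  4B+5 with L!(2i) = e_i and L!(2k+1) = P_k, concatenated as paths.
  P[u,v_k] is the concatenation of the pieces up to P_k, P[u_k,v] that of the pieces from P_k on.\<close>
definition bipath ::
  "'a set \<Rightarrow> ('a \<times> 'a) set \<Rightarrow> ('a \<Rightarrow> 'a \<Rightarrow> real) \<Rightarrow> (nat \<Rightarrow> 'a set) \<Rightarrow> nat \<Rightarrow> real \<Rightarrow> nat \<Rightarrow> 'a list \<Rightarrow> bool" where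
  "bipath V E w U p e B P \<longleftrightarrow>
     (\<exists>L :: 'a list list. length L = 4 * B + 5 \<and> chain_ok L \<and> chain L = P \<and>
        (\<forall>i \<le> 2 * B + 2. L ! (2 * i) = [] \<or> (\<exists>a b. L ! (2 * i) = [a, b] \<and> (a, b) \<in> E)) \<and>
        (\<forall>k \<le> 2 * B + 1. L ! (2 * k + 1) \<noteq> [] \<longrightarrow>
            two_sp V E w U p (L ! (2 * k + 1)) \<and>
            (k < B + 1 \<longrightarrow> wlen w (chain (take (2 * k + 2) L)) \<le> (1 + e) ^ k) \<and>
            (k \<ge> B + 1 \<longrightarrow> wlen w (chain (drop (2 * k + 1) L)) \<le> (1 + e) ^ (2 * B + 1 - k))))"

end

(*
  Label every edge of P with a slot of the bipath decomposition. An inner vertex t lies in the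
  eps5-segment with index floor(log_{1+eps5} |P[u,v_t]|) + 1, between 1 and B, if it lies on the
  u-half of P, and with index 2B - floor(log_{1+eps5} |P[v_t,v]|), between B+1 and 2B, otherwise;
  since |P| < (1+eps5)^B this encodes the segments injectively and monotonically along P.
  The edge entering segment k gets slot 2k (it becomes e_k), the remaining edges of segment k get
  slot 2k+1 (they form P_k), and the last edge of P gets slot 4B+4. Cutting P where the slot
  changes yields the 4B+5 pieces: an even piece is at most one edge, and a nonempty odd piece is a
  whole segment, hence of the form pi(x,z) o pi(z,y) by hypothesis, whose end lies at distance
  less than (1+eps5)^k from u (for k <= B), respectively whose start lies at distance less than
  (1+eps5)^(2B+1-k) from v. A single-vertex path [x] is the bipath with the one piece pi(x,x).
*)
theory Submission
  imports Defs
begin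

section \<open>Subpaths and cutting a path into pieces\<close>

lemma pcat_Nil2 [simp]: "pcat p [] = p"
  by (cases p) auto

lemma pcat_eq_append_tl: "p \<noteq> [] \<Longrightarrow> q \<noteq> [] \<Longrightarrow> pcat p q = p @ tl q"
  by (cases p; cases q) auto

lemma length_subp: "b < length P \<Longrightarrow> length (subp P a b) = Suc b - a"
  unfolding subp_def by auto

lemma nth_subp: "b < length P \<Longrightarrow> i < Suc b - a \<Longrightarrow> subp P a b ! i = P ! (a + i)"
  unfolding subp_def by auto

lemma subp_eq_Nil_iff: "b < length P \<Longrightarrow> subp P a b = [] \<longleftrightarrow> b < a"
  unfolding subp_def by auto

lemma hd_subp: "a \<le> b \<Longrightarrow> b < length P \<Longrightarrow> hd (subp P a b) = P ! a"
  unfolding subp_def by (simp add: hd_drop_conv_nth)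

lemma last_subp: "a \<le> b \<Longrightarrow> b < length P \<Longrightarrow> last (subp P a b) = P ! b"
  by (simp add: last_conv_nth subp_eq_Nil_iff length_subp nth_subp)

lemma nth_mem_subp: "a \<le> z \<Longrightarrow> z \<le> b \<Longrightarrow> b < length P \<Longrightarrow> P ! z \<in> set (subp P a b)"
  using nth_mem[of "z - a" "subp P a b"] by (simp add: length_subp nth_subp)

lemma subp_0: "subp P 0 b = take (Suc b) P"
  unfolding subp_def by simp

lemma subp_Suc: "Suc a < length P \<Longrightarrow> subp P a (Suc a) = [P ! a, P ! Suc a]"
  unfolding subp_def by (simp add: Cons_nth_drop_Suc[symmetric] numeral_2_eq_2)

lemma pcat_subp:
  assumes "a \<le> b" "b \<le> c" "c < length P"
  shows "pcat (subp P a b) (subp P b c) = subp P a c"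
proof -
  have "subp P a c = take ((Suc b - a) + (c - b)) (drop a P)"
    using assms by (simp add: subp_def)
  also have "\<dots> = subp P a b @ tl (subp P b c)"
    unfolding take_add using assms by (simp add: subp_def tl_take tl_drop drop_Suc drop_drop)
  finally show ?thesis
    using assms by (simp add: pcat_eq_append_tl subp_eq_Nil_iff)
qed

definition cut_piece :: "'a list \<Rightarrow> (nat \<Rightarrow> nat) \<Rightarrow> nat \<Rightarrow> 'a list" where
  "cut_piece P c j = (if c j = c (Suc j) then [] else subp P (c j) (c (Suc j)))"

lemma chain_cut_pieces:
  assumes "mono c" "c n < length P" "m \<le> n"
  shows "chain (map (cut_piece P c) [m..<n]) = (if c m = c n then [] else subp P (c m) (c n))"
  using assms(2,3)
proof (induction n)
  case (Suc n)
  show ?case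
  proof (cases "m = Suc n")
    case False
    then have "m \<le> n"
      using Suc.prems by simp
    have mono: "c m \<le> c n" "c n \<le> c (Suc n)"
      using monoD[OF assms(1), of m n] monoD[OF assms(1), of n "Suc n"] \<open>m \<le> n\<close> by auto
    have "chain (map (cut_piece P c) [m..<Suc n])
        = pcat (chain (map (cut_piece P c) [m..<n])) (cut_piece P c n)"
      using \<open>m \<le> n\<close> by (simp add: chain_def)
    also have "chain (map (cut_piece P c) [m..<n])
        = (if c m = c n then [] else subp P (c m) (c n))"
      using Suc mono \<open>m \<le> n\<close> by simp
    finally show ?thesis
      using Suc.prems mono by (auto simp: cut_piece_def pcat_subp)
  qed (simp add: chain_def)
qed (simp add: chain_def)

lemma chain_ok_cut_pieces:
  assumes "mono c" "c N < length P"
  shows "chain_ok (map (cut_piece P c) [0..<N])"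
  unfolding chain_ok_def
proof (intro allI impI)
  fix m assume "m < length (map (cut_piece P c) [0..<N])"
  then have "m < N" by simp
  then have mono: "c 0 \<le> c m" "c m \<le> c (Suc m)" "c (Suc m) < length P"
    using assms(2) monoD[OF assms(1), of 0 m] monoD[OF assms(1), of m "Suc m"]
      monoD[OF assms(1), of "Suc m" N] by auto
  have "chain (take m (map (cut_piece P c) [0..<N]))
      = (if c 0 = c m then [] else subp P (c 0) (c m))"
    using chain_cut_pieces[OF assms(1), of m P 0] mono \<open>m < N\<close> by (simp add: take_map)
  then show "compat (chain (take m (map (cut_piece P c) [0..<N]))) (map (cut_piece P c) [0..<N] ! m)"
    using mono \<open>m < N\<close> by (simp add: compat_def cut_piece_def last_subp hd_subp)
qed

lemma chain_cut_pieces_all: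
  assumes "mono c" "c 0 = 0" "c N = length P - 1" "2 \<le> length P"
  shows "chain (map (cut_piece P c) [0..<N]) = P"
  using chain_cut_pieces[OF assms(1), of N P 0] assms by (simp add: subp_0)

lemma downward_closed_eq_lessThan_card:
  fixes S :: "nat set"
  assumes "finite S" and closed: "\<And>s t. t \<in> S \<Longrightarrow> s \<le> t \<Longrightarrow> s \<in> S"
  shows "S = {..<card S}"
proof (cases "S = {}")
  case False
  have "S = {..Max S}"
  proof
    show "S \<subseteq> {..Max S}"
      using assms(1) by auto
    show "{..Max S} \<subseteq> S"
      using closed[OF Max_in[OF assms(1) False]] by auto
  qed
  then show ?thesis
    by (metis card_atMost lessThan_Suc_atMost)
qed simp

section \<open>Logarithmic scales and distances along a path\<close>

lemma less_power_Suc_nat_floor_log: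
  assumes "1 < b" "1 \<le> x"
  shows "x < b ^ Suc (nat \<lfloor>log b x\<rfloor>)"
proof -
  have "x = b powr log b x"
    using assms by simp
  also have "\<dots> < b powr real (Suc (nat \<lfloor>log b x\<rfloor>))"
    using assms by (intro powr_less_mono) linarith+
  also have "\<dots> = b ^ Suc (nat \<lfloor>log b x\<rfloor>)"
    by (rule powr_realpow) (use assms in simp)
  finally show ?thesis .
qed

lemma nat_floor_log_less:
  assumes "1 < b" "1 \<le> x" "x < b ^ n"
  shows "nat \<lfloor>log b x\<rfloor> < n"
proof -
  have "log b x < real n"
    using assms by (simp add: log_less_iff powr_realpow)
  moreover have "0 \<le> log b x"
    using assms by simp
  ultimately show ?thesis
    by linarith
qed

lemma nat_floor_log_mono:
  "1 < b \<Longrightarrow> 0 < x \<Longrightarrow> x \<le> y \<Longrightarrow> nat \<lfloor>log b x\<rfloor> \<le> nat \<lfloor>log b y\<rfloor>"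
  by (simp add: floor_mono nat_mono)

lemma wlen_take_Suc:
  assumes "t < length P"
  shows "wlen w (take (Suc t) P) = (\<Sum>i<t. w (P ! i) (P ! Suc i))"
proof -
  have "length (take (Suc t) P) - 1 = t"
    using assms by simp
  then show ?thesis
    unfolding wlen_def by (auto intro: sum.cong)
qed

lemma wlen_drop:
  "wlen w (drop t P) = (\<Sum>i<length P - 1 - t. w (P ! (t + i)) (P ! Suc (t + i)))"
  unfolding wlen_def by (simp add: diff_commute)

lemma wlen_take_add_wlen_drop:
  assumes "t < length P"
  shows "wlen w (take (Suc t) P) + wlen w (drop t P) = wlen w P"
proof -
  define r where "r = length P - 1 - t"
  have split: "(\<Sum>i<t + k. f i) = (\<Sum>i<t. f i) + (\<Sum>i<k. f (t + i))"
    for k and f :: "nat \<Rightarrow> real"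
    by (induction k) auto
  have "wlen w P = (\<Sum>i<t + r. w (P ! i) (P ! Suc i))"
    using assms unfolding wlen_def r_def by simp
  also have "\<dots> = wlen w (take (Suc t) P) + wlen w (drop t P)"
    unfolding split wlen_take_Suc[OF assms] wlen_drop r_def ..
  finally show ?thesis ..
qed

lemma two_sp_subp:
  assumes "a \<le> z" "z \<le> b" "b < length P" "1 \<le> i" "i \<le> p" "1 \<le> j" "j \<le> p"
    and "subp P a b = pcat (piG V E w U p i (P ! a) (P ! z)) (piG V E w U p j (P ! z) (P ! b))"
  shows "two_sp V E w U p (subp P a b)"
proof -
  have "hd (subp P a b) = P ! a" "last (subp P a b) = P ! b"
    using assms(1-3) by (simp_all add: hd_subp last_subp)
  then show ?thesis
    unfolding two_sp_def using assms nth_mem_subp[of a z b P]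
    by (intro bexI[of _ "P ! z"] exI[of _ i] exI[of _ j]) simp_all
qed

section \<open>The segments of a path and the slots of its edges\<close>

locale segmented_path =
  fixes w :: "'a \<Rightarrow> 'a \<Rightarrow> real" and e :: real and B :: nat and P :: "'a list"
  assumes e_pos: "0 < e"
    and weight_ge_1: "\<And>i. Suc i < length P \<Longrightarrow> 1 \<le> w (P ! i) (P ! Suc i)"
    and wlen_less_power: "wlen w P < (1 + e) ^ B"
    and two_le_length: "2 \<le> length P"
begin

abbreviation nedges :: nat where
  "nedges \<equiv> length P - 1"

abbreviation scale :: "real \<Rightarrow> nat" where
  "scale x \<equiv> nat \<lfloor>log (1 + e) x\<rfloor>"

definition dist_u :: "nat \<Rightarrow> real" where
  "dist_u t = wlen w (take (Suc t) P)"

definition dist_v :: "nat \<Rightarrow> real" where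
  "dist_v t = wlen w (drop t P)"

definition seg_index :: "nat \<Rightarrow> nat" where
  "seg_index t =
    (if dist_u t \<le> wlen w P / 2 then Suc (scale (dist_u t)) else 2 * B - scale (dist_v t))"

definition edge_slot :: "nat \<Rightarrow> nat" where
  "edge_slot t = (if Suc t = nedges then 4 * B + 4
     else if 1 \<le> t \<and> seg_index t = seg_index (Suc t) then 2 * seg_index t + 1
     else 2 * seg_index (Suc t))"

definition cut :: "nat \<Rightarrow> nat" where
  "cut j = card {t. t < nedges \<and> edge_slot t < j}"

definition pieces :: "'a list list" where
  "pieces = map (cut_piece P cut) [0..<4 * B + 5]"

lemma base_gt_1: "1 < 1 + e"
  using e_pos by simp

lemma dist_u_Suc: "Suc t < length P \<Longrightarrow> dist_u (Suc t) = dist_u t + w (P ! t) (P ! Suc t)"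
  unfolding dist_u_def by (simp add: wlen_take_Suc)

lemma dist_u_add_dist_v: "t < length P \<Longrightarrow> dist_u t + dist_v t = wlen w P"
  unfolding dist_u_def dist_v_def by (rule wlen_take_add_wlen_drop)

lemma dist_u_nedges: "dist_u nedges = wlen w P"
  using two_le_length unfolding dist_u_def by simp

lemma dist_u_increase:
  assumes "s \<le> t" "t < length P"
  shows "dist_u s + real (t - s) \<le> dist_u t"
  using assms
proof (induction t)
  case (Suc t)
  show ?case
  proof (cases "s = Suc t")
    case False
    then have "dist_u s + real (t - s) \<le> dist_u t"
      using Suc by simp
    then show ?thesis
      using Suc.prems False dist_u_Suc[of t] weight_ge_1[of t] by (simp add: Suc_diff_le)
  qed simp
qed simp

lemma dist_u_ge_1: "1 \<le> t \<Longrightarrow> t < length P \<Longrightarrow> 1 \<le> dist_u t"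
  using dist_u_increase[of 0 t] by (simp add: dist_u_def wlen_def)

lemma dist_v_ge_1:
  assumes "t < nedges"
  shows "1 \<le> dist_v t"
proof -
  have "dist_u t + real (nedges - t) \<le> dist_u nedges"
    using assms by (intro dist_u_increase) auto
  moreover have "1 \<le> real (nedges - t)"
    using assms by simp
  moreover have "dist_u t + dist_v t = wlen w P"
    using assms by (intro dist_u_add_dist_v) simp
  ultimately show ?thesis
    using dist_u_nedges by linarith
qed

lemma dist_u_mono: "s \<le> t \<Longrightarrow> t < length P \<Longrightarrow> dist_u s \<le> dist_u t"
  using dist_u_increase by fastforce

lemma dist_u_less_power:
  assumes "t < length P"
  shows "dist_u t < (1 + e) ^ B"
proof -
  have "dist_u t \<le> dist_u nedges"
    using assms by (intro dist_u_mono) auto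
  then show ?thesis
    using dist_u_nedges wlen_less_power by simp
qed

lemma dist_v_less_power: "t < length P \<Longrightarrow> dist_v t < (1 + e) ^ B"
  using dist_u_increase[of 0 t] dist_u_add_dist_v[of t] wlen_less_power
  by (simp add: dist_u_def wlen_def)

lemma scale_dist_u_less: "1 \<le> t \<Longrightarrow> t < nedges \<Longrightarrow> scale (dist_u t) < B"
  using nat_floor_log_less base_gt_1 dist_u_ge_1 dist_u_less_power by simp

lemma scale_dist_v_less: "t < nedges \<Longrightarrow> scale (dist_v t) < B"
  using nat_floor_log_less base_gt_1 dist_v_ge_1 dist_v_less_power by simp

lemma seg_index_le_B_iff:
  "1 \<le> t \<Longrightarrow> t < nedges \<Longrightarrow> seg_index t \<le> B \<longleftrightarrow> dist_u t \<le> wlen w P / 2"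
  using scale_dist_u_less[of t] scale_dist_v_less[of t] unfolding seg_index_def by auto

lemma seg_index_range: "1 \<le> t \<Longrightarrow> t < nedges \<Longrightarrow> 1 \<le> seg_index t \<and> seg_index t \<le> 2 * B"
  using scale_dist_u_less[of t] scale_dist_v_less[of t] unfolding seg_index_def by auto

lemma seg_index_Suc_mono:
  assumes "1 \<le> t" "Suc t < nedges"
  shows "seg_index t \<le> seg_index (Suc t)"
proof -
  have u: "dist_u t \<le> dist_u (Suc t)"
    using assms by (intro dist_u_mono) auto
  have "dist_u t + dist_v t = wlen w P" "dist_u (Suc t) + dist_v (Suc t) = wlen w P"
    using assms by (intro dist_u_add_dist_v; simp)+
  then have v: "dist_v (Suc t) \<le> dist_v t"
    using u by simp
  have "1 \<le> dist_u t"
    using assms by (intro dist_u_ge_1) auto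
  then have scale_u: "scale (dist_u t) \<le> scale (dist_u (Suc t))"
    using u by (intro nat_floor_log_mono base_gt_1) auto
  have scale_v: "scale (dist_v (Suc t)) \<le> scale (dist_v t)"
    using v assms dist_v_ge_1[of "Suc t"] by (intro nat_floor_log_mono base_gt_1) auto
  show ?thesis
  proof (cases "dist_u (Suc t) \<le> wlen w P / 2")
    case True
    then show ?thesis
      using u scale_u unfolding seg_index_def by simp
  next
    case v_side: False
    show ?thesis
    proof (cases "dist_u t \<le> wlen w P / 2")
      case True
      then show ?thesis
        using assms v_side seg_index_le_B_iff[of t] seg_index_le_B_iff[of "Suc t"] by simp
    next
      case False
      then show ?thesis
        using v_side scale_v unfolding seg_index_def by (simp add: diff_le_mono2)
    qed
  qed
qed

lemma seg_index_mono:
  assumes "1 \<le> s" "s \<le> t" "t < nedges"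
  shows "seg_index s \<le> seg_index t"
  by (rule lift_Suc_mono_le_ivl[where N = "{1..<nedges - 1}"])
    (use assms seg_index_Suc_mono in auto)

lemma seg_index_eq_between:
  "1 \<le> s \<Longrightarrow> s \<le> t \<Longrightarrow> t \<le> r \<Longrightarrow> r < nedges \<Longrightarrow> seg_index r = seg_index s \<Longrightarrow>
    seg_index t = seg_index s"
  using seg_index_mono[of s t] seg_index_mono[of t r] by simp

lemma same_seg_iff_seg_index_eq:
  assumes "1 \<le> i" "i < nedges" "1 \<le> j" "j < nedges"
  shows "same_seg w e P i j \<longleftrightarrow> seg_index i = seg_index j"
proof -
  have v_half: "dist_v t < wlen w P / 2 \<longleftrightarrow> \<not> dist_u t \<le> wlen w P / 2" if "t < nedges" for t
  proof -
    have "dist_u t + dist_v t = wlen w P"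
      using that by (intro dist_u_add_dist_v) simp
    then show ?thesis
      by linarith
  qed
  have floor_eq: "\<lfloor>log (1 + e) x\<rfloor> = \<lfloor>log (1 + e) y\<rfloor> \<longleftrightarrow> scale x = scale y"
    if "1 \<le> x" "1 \<le> y" for x y
    using that base_gt_1 by (simp add: eq_nat_nat_iff)
  have "same_seg w e P i j \<longleftrightarrow>
      (dist_u i \<le> wlen w P / 2 \<and> dist_u j \<le> wlen w P / 2 \<and> scale (dist_u i) = scale (dist_u j)) \<or>
      (\<not> dist_u i \<le> wlen w P / 2 \<and> \<not> dist_u j \<le> wlen w P / 2 \<and> scale (dist_v i) = scale (dist_v j))"
    using assms v_half[of i] v_half[of j] floor_eq dist_u_ge_1[of i] dist_u_ge_1[of j]
      dist_v_ge_1[of i] dist_v_ge_1[of j]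
    unfolding same_seg_def Let_def dist_u_def dist_v_def by auto
  also have "\<dots> \<longleftrightarrow> seg_index i = seg_index j"
  proof -
    have "2 * B - scale (dist_v i) = 2 * B - scale (dist_v j) \<longleftrightarrow>
        scale (dist_v i) = scale (dist_v j)"
      using assms scale_dist_v_less[of i] scale_dist_v_less[of j] by arith
    then show ?thesis
      using assms seg_index_le_B_iff[of i] seg_index_le_B_iff[of j]
      unfolding seg_index_def by (auto split: if_splits)
  qed
  finally show ?thesis .
qed

lemma seg_class_eq:
  "1 \<le> t \<Longrightarrow> t < nedges \<Longrightarrow>
    seg_class w e P t = {s. 1 \<le> s \<and> s < nedges \<and> seg_index s = seg_index t}"
  unfolding seg_class_def using same_seg_iff_seg_index_eq[of t] by auto

lemma edge_slot_last: "edge_slot (nedges - 1) = 4 * B + 4"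
proof -
  have "Suc (nedges - 1) = nedges"
    using two_le_length by simp
  then show ?thesis
    unfolding edge_slot_def by simp
qed

lemma edge_slot_bounds:
  "Suc t < nedges \<Longrightarrow>
    2 * seg_index (Suc t) \<le> edge_slot t \<and> edge_slot t \<le> 2 * seg_index (Suc t) + 1"
  unfolding edge_slot_def by simp

lemma edge_slot_Suc_lower:
  assumes "Suc t < nedges"
  shows "2 * seg_index (Suc t) + 1 \<le> edge_slot (Suc t)"
proof (cases "Suc (Suc t) = nedges")
  case True
  then show ?thesis
    using seg_index_range[of "Suc t"] assms unfolding edge_slot_def by simp
next
  case False
  then have "Suc (Suc t) < nedges"
    using assms by simp
  then show ?thesis
    using seg_index_Suc_mono[of "Suc t"] edge_slot_bounds[of "Suc t"] unfolding edge_slot_def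
    by (cases "seg_index (Suc t) = seg_index (Suc (Suc t))") auto
qed

lemma edge_slot_Suc_ge: "Suc t < nedges \<Longrightarrow> edge_slot t \<le> edge_slot (Suc t)"
  using edge_slot_bounds[of t] edge_slot_Suc_lower[of t] by linarith

lemma edge_slot_Suc_gt_if_even:
  assumes "Suc t < nedges" "even (edge_slot t)"
  shows "edge_slot t < edge_slot (Suc t)"
proof -
  have "edge_slot t \<noteq> 2 * seg_index (Suc t) + 1"
    using assms(2) by auto
  then show ?thesis
    using edge_slot_bounds[OF assms(1)] edge_slot_Suc_lower[OF assms(1)] by linarith
qed

lemma edge_slot_odd:
  assumes "t < nedges" "edge_slot t = 2 * k + 1"
  shows "1 \<le> t" "Suc t < nedges" "seg_index t = k" "seg_index (Suc t) = k"
proof -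
  have odd: "odd (edge_slot t)"
    using assms(2) by simp
  then have not_last: "Suc t \<noteq> nedges"
    unfolding edge_slot_def by auto
  then show "Suc t < nedges"
    using assms(1) by simp
  have inner: "1 \<le> t \<and> seg_index t = seg_index (Suc t)"
    using odd not_last unfolding edge_slot_def by (auto split: if_splits)
  then have "edge_slot t = 2 * seg_index t + 1"
    using not_last unfolding edge_slot_def by simp
  then show "1 \<le> t" "seg_index t = k" "seg_index (Suc t) = k"
    using inner assms(2) by auto
qed

lemma edge_slot_mono:
  assumes "s \<le> t" "t < nedges"
  shows "edge_slot s \<le> edge_slot t"
  by (rule lift_Suc_mono_le_ivl[where N = "{..<nedges - 1}"])
    (use assms edge_slot_Suc_ge in auto)

lemma edge_slot_less:
  assumes "t < nedges"
  shows "edge_slot t < 4 * B + 5"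
proof -
  have "edge_slot t \<le> edge_slot (nedges - 1)"
    using assms by (intro edge_slot_mono) auto
  then show ?thesis
    using edge_slot_last by simp
qed

lemma less_cut_iff: "t < cut j \<longleftrightarrow> t < nedges \<and> edge_slot t < j"
proof -
  have set_eq: "{t. t < nedges \<and> edge_slot t < j} = {..<cut j}"
    unfolding cut_def
  proof (rule downward_closed_eq_lessThan_card)
    fix s t assume "t \<in> {t. t < nedges \<and> edge_slot t < j}" "s \<le> t"
    then show "s \<in> {t. t < nedges \<and> edge_slot t < j}"
      using edge_slot_mono[of s t] by simp
  qed simp
  have "(t < nedges \<and> edge_slot t < j) \<longleftrightarrow> t < cut j"
    using eqset_imp_iff[OF set_eq, of t] by (simp only: lessThan_iff mem_Collect_eq)
  then show ?thesis
    by (rule sym)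
qed

lemma mono_cut: "mono cut"
  unfolding cut_def by (intro monoI card_mono) auto

lemma cut_le: "cut j \<le> nedges"
  by (metis less_cut_iff less_irrefl not_le)

lemma cut_0: "cut 0 = 0"
  unfolding cut_def by simp

lemma cut_top: "cut (4 * B + 5) = nedges"
proof -
  have "nedges - 1 < cut (4 * B + 5)"
    using two_le_length by (simp add: less_cut_iff edge_slot_less)
  then show ?thesis
    using cut_le[of "4 * B + 5"] by simp
qed

lemma edge_slot_between_cuts:
  "cut j \<le> t \<Longrightarrow> t < cut (Suc j) \<Longrightarrow> t < nedges \<and> edge_slot t = j"
  using less_cut_iff[of t j] less_cut_iff[of t "Suc j"] by auto

lemma length_pieces: "length pieces = 4 * B + 5"
  unfolding pieces_def by simp

lemma nth_pieces: "j < 4 * B + 5 \<Longrightarrow> pieces ! j = cut_piece P cut j"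
  unfolding pieces_def by simp

lemma chain_ok_pieces: "chain_ok pieces"
  unfolding pieces_def using cut_top two_le_length by (intro chain_ok_cut_pieces mono_cut) simp

lemma chain_pieces: "chain pieces = P"
  unfolding pieces_def using cut_0 cut_top two_le_length by (intro chain_cut_pieces_all mono_cut)

lemma chain_take_pieces:
  "j \<le> 4 * B + 5 \<Longrightarrow> cut j \<noteq> 0 \<Longrightarrow> chain (take j pieces) = take (Suc (cut j)) P"
  unfolding pieces_def using chain_cut_pieces[OF mono_cut, of j P 0] cut_0 cut_le[of j]
  by (simp add: take_map subp_0)

lemma chain_drop_pieces:
  "j \<le> 4 * B + 5 \<Longrightarrow> cut j \<noteq> nedges \<Longrightarrow> chain (drop j pieces) = drop (cut j) P"
  unfolding pieces_def using chain_cut_pieces[OF mono_cut, of "4 * B + 5" P j] cut_top two_le_length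
  by (simp add: drop_map subp_def)

lemma even_piece_is_edge:
  assumes "i \<le> 2 * B + 2" and edges: "\<And>t. Suc t < length P \<Longrightarrow> (P ! t, P ! Suc t) \<in> E"
  shows "pieces ! (2 * i) = [] \<or> (\<exists>x y. pieces ! (2 * i) = [x, y] \<and> (x, y) \<in> E)"
proof (cases "cut (2 * i) = cut (Suc (2 * i))")
  case False
  define a where "a = cut (2 * i)"
  have "a < cut (Suc (2 * i))"
    using False monoD[OF mono_cut, of "2 * i" "Suc (2 * i)"] unfolding a_def by simp
  moreover have "\<not> Suc a < cut (Suc (2 * i))"
  proof
    assume "Suc a < cut (Suc (2 * i))"
    then have "Suc a < nedges" "edge_slot a = 2 * i" "edge_slot (Suc a) = 2 * i"
      using edge_slot_between_cuts[of "2 * i"] unfolding a_def by auto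
    then show False
      using edge_slot_Suc_gt_if_even[of a] by simp
  qed
  ultimately have "cut (Suc (2 * i)) = Suc a"
    by simp
  moreover have "Suc a < length P"
    using cut_le[of "Suc (2 * i)"] calculation by simp
  ultimately show ?thesis
    using assms False edges[of a] by (simp add: nth_pieces cut_piece_def a_def subp_Suc)
qed (use assms in \<open>simp add: nth_pieces cut_piece_def\<close>)

lemma odd_piece_ends:
  assumes "a = cut (2 * k + 1)" "b = cut (2 * k + 2)" "a \<noteq> b"
  shows "a < b" "1 \<le> a" "b < nedges" "seg_index a = k" "seg_index b = k"
proof -
  show "a < b"
    using assms monoD[OF mono_cut, of "2 * k + 1" "2 * k + 2"] by simp
  have slot: "t < nedges \<and> edge_slot t = 2 * k + 1" if "a \<le> t" "t < b" for t
    using edge_slot_between_cuts[of "2 * k + 1" t] that assms by simp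
  show "1 \<le> a" "seg_index a = k"
    using slot[of a] edge_slot_odd[of a k] \<open>a < b\<close> by auto
  have "Suc (b - 1) < nedges" "seg_index (Suc (b - 1)) = k"
    using slot[of "b - 1"] edge_slot_odd[of "b - 1" k] \<open>a < b\<close> by auto
  then show "b < nedges" "seg_index b = k"
    using \<open>a < b\<close> by auto
qed

lemma seg_class_odd_piece:
  assumes "a = cut (2 * k + 1)" "b = cut (2 * k + 2)" "a \<noteq> b"
  shows "seg_class w e P a = {a..b}"
proof -
  note ends = odd_piece_ends[OF assms]
  have "{s. 1 \<le> s \<and> s < nedges \<and> seg_index s = k} = {a..b}"
  proof (intro equalityI subsetI)
    fix s assume s: "s \<in> {s. 1 \<le> s \<and> s < nedges \<and> seg_index s = k}"
    have "a \<le> s"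
    proof (rule ccontr)
      assume "\<not> a \<le> s"
      then have "seg_index (a - 1) = k" "1 \<le> a - 1"
        using s ends seg_index_eq_between[of s "a - 1" a] by auto
      then have "edge_slot (a - 1) = 2 * k + 1"
        using ends unfolding edge_slot_def by auto
      moreover have "edge_slot (a - 1) < 2 * k + 1"
        using less_cut_iff[of "a - 1" "2 * k + 1"] assms(1) ends by simp
      ultimately show False
        by simp
    qed
    moreover have "s \<le> b"
    proof (rule ccontr)
      assume "\<not> s \<le> b"
      then have "Suc b < nedges"
        using s by simp
      moreover have "seg_index (Suc b) = k"
        using s ends \<open>\<not> s \<le> b\<close> seg_index_eq_between[of b "Suc b" s] by simp
      ultimately have "edge_slot b \<le> 2 * k + 1"
        using edge_slot_bounds[of b] by simp
      moreover have "2 * k + 2 \<le> edge_slot b"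
        using less_cut_iff[of b "2 * k + 2"] assms(2) ends by simp
      ultimately show False
        by simp
    qed
    ultimately show "s \<in> {a..b}"
      by simp
  next
    fix s assume "s \<in> {a..b}"
    then show "s \<in> {s. 1 \<le> s \<and> s < nedges \<and> seg_index s = k}"
      using ends seg_index_eq_between[of a s b] by auto
  qed
  then show ?thesis
    using seg_class_eq[of a] ends by simp
qed

lemma two_sp_odd_piece:
  assumes "segment_bipath V E w U p e P" "cut (2 * k + 1) \<noteq> cut (2 * k + 2)"
  shows "two_sp V E w U p (subp P (cut (2 * k + 1)) (cut (2 * k + 2)))"
proof -
  define a b where "a = cut (2 * k + 1)" and "b = cut (2 * k + 2)"
  note ends = odd_piece_ends[OF a_def b_def assms(2)[folded a_def b_def]]
  have "Min {a..b} = a" "Max {a..b} = b"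
    using ends by (auto intro: Min_eqI Max_eqI)
  moreover have "a \<in> {1..<length P - 1}"
    using ends by simp
  ultimately obtain z i j where "z \<in> {a..b}" "1 \<le> i" "i \<le> p" "1 \<le> j" "j \<le> p"
    "subp P a b = pcat (piG V E w U p i (P ! a) (P ! z)) (piG V E w U p j (P ! z) (P ! b))"
    using bspec[OF assms(1)[unfolded segment_bipath_def], of a]
      seg_class_odd_piece[OF a_def b_def assms(2)[folded a_def b_def]]
    by (auto simp: Let_def)
  then show ?thesis
    unfolding a_def[symmetric] b_def[symmetric] using ends by (intro two_sp_subp) auto
qed

lemma wlen_up_to_odd_piece:
  assumes "cut (2 * k + 1) \<noteq> cut (2 * k + 2)" "k \<le> B"
  shows "wlen w (chain (take (2 * k + 2) pieces)) \<le> (1 + e) ^ k"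
proof -
  define b where "b = cut (2 * k + 2)"
  note ends = odd_piece_ends[OF refl b_def assms(1)[folded b_def]]
  have "dist_u b \<le> wlen w P / 2"
    using ends assms(2) seg_index_le_B_iff[of b] by simp
  then have "k = Suc (scale (dist_u b))"
    using ends unfolding seg_index_def by simp
  moreover have "1 \<le> dist_u b"
    using ends by (intro dist_u_ge_1) auto
  ultimately have "dist_u b < (1 + e) ^ k"
    using less_power_Suc_nat_floor_log[OF base_gt_1] by simp
  moreover have "chain (take (2 * k + 2) pieces) = take (Suc b) P"
    using assms(2) ends unfolding b_def by (intro chain_take_pieces) auto
  ultimately show ?thesis
    unfolding dist_u_def by simp
qed

lemma wlen_from_odd_piece:
  assumes "cut (2 * k + 1) \<noteq> cut (2 * k + 2)" "B < k" "k \<le> 2 * B + 1"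
  shows "wlen w (chain (drop (2 * k + 1) pieces)) \<le> (1 + e) ^ (2 * B + 1 - k)"
proof -
  define a where "a = cut (2 * k + 1)"
  note ends = odd_piece_ends[OF a_def refl assms(1)[folded a_def]]
  have "\<not> dist_u a \<le> wlen w P / 2"
    using ends assms(2) seg_index_le_B_iff[of a] by simp
  then have "k = 2 * B - scale (dist_v a)"
    using ends unfolding seg_index_def by simp
  then have "2 * B + 1 - k = Suc (scale (dist_v a))"
    using ends scale_dist_v_less[of a] by simp
  moreover have "1 \<le> dist_v a"
    using ends by (intro dist_v_ge_1) simp
  ultimately have "dist_v a < (1 + e) ^ (2 * B + 1 - k)"
    using less_power_Suc_nat_floor_log[OF base_gt_1] by simp
  moreover have "chain (drop (2 * k + 1) pieces) = drop a P"
    using assms(3) ends unfolding a_def by (intro chain_drop_pieces) auto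
  ultimately show ?thesis
    unfolding dist_v_def by simp
qed

theorem bipath_if_segment_bipath:
  assumes "segment_bipath V E w U p e P" "\<And>t. Suc t < length P \<Longrightarrow> (P ! t, P ! Suc t) \<in> E"
  shows "bipath V E w U p e B P"
  unfolding bipath_def
proof (intro exI[of _ pieces] conjI allI impI)
  fix k assume k: "k \<le> 2 * B + 1" "pieces ! (2 * k + 1) \<noteq> []"
  then have cuts: "cut (2 * k + 1) \<noteq> cut (2 * k + 2)"
    and piece: "pieces ! (2 * k + 1) = subp P (cut (2 * k + 1)) (cut (2 * k + 2))"
    by (auto simp: nth_pieces cut_piece_def)
  show "two_sp V E w U p (pieces ! (2 * k + 1))"
    unfolding piece using assms(1) cuts by (rule two_sp_odd_piece)
  show "wlen w (chain (take (2 * k + 2) pieces)) \<le> (1 + e) ^ k" if "k < B + 1"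
    using cuts that by (intro wlen_up_to_odd_piece) auto
  show "wlen w (chain (drop (2 * k + 1) pieces)) \<le> (1 + e) ^ (2 * B + 1 - k)" if "B + 1 \<le> k"
    using cuts that k by (intro wlen_from_odd_piece) auto
qed (use length_pieces chain_ok_pieces chain_pieces even_piece_is_edge[OF _ assms(2)] in auto)

end

lemma foldl_pcat_replicate_Nil: "foldl pcat q (replicate n []) = q"
  by (induction n) auto

lemma bipath_singleton:
  assumes "two_sp V E w U p [x]"
  shows "bipath V E w U p e B [x]"
proof -
  define L where "L = [[], [x]] @ replicate (4 * B + 3) []"
  have nth_L: "L ! j = (if j = 1 then [x] else [])" if "j < 4 * B + 5" for j
    using that unfolding L_def by (auto simp: nth_Cons split: nat.split)
  have chain_take_L: "chain (take m L) = (if m \<le> 1 then [] else [x])" for m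
  proof (cases m)
    case (Suc m')
    then show ?thesis
      by (cases m') (simp_all add: L_def chain_def foldl_pcat_replicate_Nil)
  qed (simp add: chain_def)
  have "length L = 4 * B + 5"
    unfolding L_def by simp
  moreover have "chain L = [x]"
    using chain_take_L[of "length L"] calculation by simp
  ultimately show ?thesis
    unfolding bipath_def using assms nth_L
    by (intro exI[of _ L]) (auto simp: chain_ok_def compat_def wlen_def chain_take_L)
qed

lemma eps5_pos:
  assumes "3 \<le> n" "0 < \<epsilon>"
  shows "0 < eps5 n \<epsilon>"
proof -
  have "exp 1 \<le> real n"
    using exp_le assms(1) by linarith
  then have "ln (exp 1) \<le> ln (real n)"
    using assms(1) by (subst ln_le_cancel_iff) auto
  then have "1 \<le> ln (real n)"
    by simp
  then show ?thesis
    unfolding eps5_def using assms(2) by simp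
qed

lemma wlen_le_mult:
  assumes "\<And>i. Suc i < length P \<Longrightarrow> w (P ! i) (P ! Suc i) \<le> W"
  shows "wlen w P \<le> real (length P - 1) * W"
  unfolding wlen_def using sum_bounded_above[of "{..<length P - 1}" _ W] assms by simp

lemma wlen_less_power_ceiling_log:
  assumes "1 < b" "2 \<le> length P" "length P \<le> n"
    and weights: "\<And>i. Suc i < length P \<Longrightarrow>
      1 \<le> w (P ! i) (P ! Suc i) \<and> w (P ! i) (P ! Suc i) \<le> W"
  shows "wlen w P < b ^ nat \<lceil>log b (real n * W)\<rceil>"
proof -
  have "1 \<le> W"
    using weights[of 0] assms(2) by force
  have "wlen w P \<le> real (length P - 1) * W"
    using weights by (intro wlen_le_mult) auto
  also have "\<dots> < real n * W"
    using \<open>1 \<le> W\<close> assms(2,3) by (intro mult_strict_right_mono) auto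
  also have "\<dots> = b powr log b (real n * W)"
    using \<open>1 \<le> W\<close> assms by simp
  also have "\<dots> \<le> b powr real (nat \<lceil>log b (real n * W)\<rceil>)"
    using assms(1) by (intro powr_mono) linarith+
  also have "\<dots> = b ^ nat \<lceil>log b (real n * W)\<rceil>"
    by (rule powr_realpow) (use assms(1) in simp)
  finally show ?thesis .
qed

lemma is_shortest_singleton:
  assumes "x \<in> S" "\<And>y z. (y, z) \<in> F \<Longrightarrow> 0 \<le> w y z"
  shows "is_shortest S F w x x [x]"
  unfolding is_shortest_def is_path_def wlen_def using assms by (auto intro!: sum_nonneg)

lemma two_sp_singleton:
  assumes "1 \<le> p" "x \<in> U 1" "x \<in> V" "sym E" "\<And>y z. (y, z) \<in> E \<Longrightarrow> 0 \<le> w y z"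
    and unique: "\<forall>S F x y Q1 Q2. S \<subseteq> V \<longrightarrow> F \<subseteq> E \<inter> (S \<times> S) \<longrightarrow> sym F \<longrightarrow>
      is_shortest S F w x y Q1 \<longrightarrow> is_shortest S F w x y Q2 \<longrightarrow> Q1 = Q2"
  shows "two_sp V E w U p [x]"
proof -
  have "1 \<in> {l \<in> {1..p}. x \<in> U l}"
    using assms(1,2) by simp
  then have "lev U p x \<le> p"
    unfolding lev_def using Max_in[of "{l \<in> {1..p}. x \<in> U l}"] by fastforce
  then have shortest: "is_shortest (Gi_V V U p p) (Gi_E V E U p p) w x x [x]"
    using assms(3,5) by (intro is_shortest_singleton) (auto simp: Gi_V_def Gi_E_def)
  have "Gi_V V U p p \<subseteq> V" "Gi_E V E U p p \<subseteq> E \<inter> (Gi_V V U p p \<times> Gi_V V U p p)"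
    unfolding Gi_V_def Gi_E_def by auto
  moreover have "sym (Gi_E V E U p p)"
    using assms(4) unfolding Gi_E_def sym_def by blast
  ultimately have "piG V E w U p p x x = [x]"
    unfolding piG_def spath_def using unique[rule_format, OF _ _ _ _ shortest] shortest
    by (intro the_equality) blast+
  then show ?thesis
    unfolding two_sp_def using assms(1) by (intro bexI[of _ x] exI[of _ p]) auto
qed

theorem lemma4p11:
  fixes V :: "'a set" and E :: "('a \<times> 'a) set" and w :: "'a \<Rightarrow> 'a \<Rightarrow> real"
    and W \<epsilon> :: real and U :: "nat \<Rightarrow> 'a set" and p :: nat and P :: "'a list" and u v :: 'a
  assumes "finite V" and "card V \<ge> 3"
    and "E \<subseteq> V \<times> V" and "sym E" and "\<forall>x. (x, x) \<notin> E"
    and "\<forall>(x, y) \<in> E. w x y = w y x \<and> 1 \<le> w x y \<and> w x y \<le> W"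
    and "\<forall>S F x y Q1 Q2. S \<subseteq> V \<longrightarrow> F \<subseteq> E \<inter> (S \<times> S) \<longrightarrow> sym F \<longrightarrow>
           is_shortest S F w x y Q1 \<longrightarrow> is_shortest S F w x y Q2 \<longrightarrow> Q1 = Q2"
    and "\<epsilon> > 0"
    and "p \<ge> 1" and "U 1 = V" and "\<forall>l \<in> {1..p}. U l \<subseteq> V"
    and "is_path V E P" and "hd P = u" and "last P = v"
    and "segment_bipath V E w U p (eps5 (card V) \<epsilon>) P"
  shows "bipath V E w U p (eps5 (card V) \<epsilon>) (Bnd (card V) W \<epsilon>) P"
proof -
  have edges: "\<And>t. Suc t < length P \<Longrightarrow> (P ! t, P ! Suc t) \<in> E"
    using assms(12) unfolding is_path_def by blast
  have weights: "\<And>y z. (y, z) \<in> E \<Longrightarrow> 1 \<le> w y z \<and> w y z \<le> W"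
    using assms(6) by blast
  show ?thesis
  proof (cases "length P = 1")
    case True
    then obtain x where P: "P = [x]"
      by (metis One_nat_def length_0_conv length_Suc_conv)
    then have "x \<in> V"
      using assms(12) unfolding is_path_def by simp
    moreover have "\<And>y z. (y, z) \<in> E \<Longrightarrow> 0 \<le> w y z"
      using weights by (meson order.trans zero_le_one)
    ultimately have "two_sp V E w U p [x]"
      using assms(10) by (intro two_sp_singleton[OF assms(9) _ _ assms(4) _ assms(7)]) auto
    then show ?thesis
      unfolding P by (rule bipath_singleton)
  next
    case False
    have "length P \<le> card V"
      using assms(1,12) unfolding is_path_def by (metis card_mono distinct_card)
    moreover have "length P \<noteq> 0"
      using assms(12) unfolding is_path_def by simp
    then have "2 \<le> length P"
      using False by linarith
    ultimately interpret segmented_path w "eps5 (card V) \<epsilon>" "Bnd (card V) W \<epsilon>" P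
      using eps5_pos[OF assms(2,8)] weights[OF edges] unfolding Bnd_def
      by unfold_locales (auto intro: wlen_less_power_ceiling_log)
    show ?thesis
      using assms(15) edges by (rule bipath_if_segment_bipath)
  qed
qed

end
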